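(* Let $n\in\mathbb{N}$ and let $\sigma$ be a probability distribution on $[n]$ such that $\sigma_{\le i}>\tfrac in$ for every $i\in[n-1]$. Then the transition probabilities $P$ on $\mathbb{N}_0^{n-1}$ (defined in the context) admit the stationary distribution \[\pi=\bigotimes_{i=1}^{n-1}\mathrm{Geom}\Big(1-\frac{i}{n\,\sigma_{\le i}}\Big).\]
   Context: For a probability distribution $\sigma$ on $[n]$ write $\sigma_i=\Pr_{i^*\sim\sigma}[i^*=i]$ and $\sigma_{\le i}=\Pr_{i^*\sim\sigma}[i^*\le i]$. $\mathrm{Geom}(p)$ is the distribution of the number of failed independent Bernoulli($p$) trials before the first success (support $\mathbb{N}_0$), and $\bigotimes$ is the product of independent distributions. States are vectors $\vec d=(d_1,\dots,d_{n-1})\in\mathbb{N}_0^{n-1}$ (interpretation: $d_i$ is the number of elements strictly between the $i$-th and $(i+1)$-th smallest top-element of a MultiQueue with $n$ queues). Let $\vec e_i$ be the $i$-th unit vector for $i\in[n-1]$, and set the conventions $d_n=\infty$ and $\vec e_n=\vec 0$. The transition from a state $\vec d_{\mathrm{start}}$ to a state $\vec d_{\mathrm{end}}$ proceeds through transitional states $(\vec d,i)\in\mathbb{N}_0^{n-1}\times[n]$: (1) sample $i^*\sim\sigma$ and go to the transitional state $(\vec d_{\mathrm{start}},i^* )$. (2) While in a transitional state $(\vec d,i)$: if $d_i>0$, then with probability $(i-1)/i$ move to the transitional state $(\vec d-\vec e_i+\vec e_{i-1},i)$, and with probability $1/i$ end the transition in the state $\vec d_{\mathrm{end}}=\vec d-\vec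 e_i$; if $d_i=0$, move to the transitional state $(\vec d,i+1)$. $P(\vec d_{\mathrm{start}},\vec d_{\mathrm{end}})$ is the resulting probability of ending in $\vec d_{\mathrm{end}}$. A distribution $\pi$ is stationary if $\vec d_{\mathrm{start}}\sim\pi$ implies $\vec d_{\mathrm{end}}\sim\pi$. *)

theory Defs
  imports "HOL-Probability.Probability"
begin

text \<open>States are vectors d = (d_1,...,d_{n-1}) in N_0^{n-1}, represented as functions
  nat => nat that are 0 outside the index set {1..n-1}.
  mq_trans n d i is the distribution of the end state of a transition that is in the
  transitional state (d,i).  For i < n it follows the elementary steps literally.
  For i = n (d_n = infinity, e_n = 0) each step either ends (prob 1/n) in d or moves to
  d + e_{n-1} (prob (n-1)/n) and stays at index n; the number of moves before ending is
  therefore Geom(1/n), and this closed form is used.  The index 0 never occurs (sigma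
  lives on [n]); that case is given an arbitrary value.\<close>

function mq_trans :: "nat \<Rightarrow> (nat \<Rightarrow> nat) \<Rightarrow> nat \<Rightarrow> (nat \<Rightarrow> nat) pmf" where
  "mq_trans n d i =
     (if i = 0 then return_pmf d
      else if n \<le> i then
        map_pmf (\<lambda>k. d(n - 1 := d (n - 1) + k)) (geometric_pmf (1 / real n))
      else if 0 < d i then
        bind_pmf (bernoulli_pmf (1 / real i))
          (\<lambda>b. if b then return_pmf (d(i := d i - 1))
               else mq_trans n (d(i := d i - 1, i - 1 := d (i - 1) + 1)) i)
      else mq_trans n d (Suc i))"
  by pat_completeness auto
termination
  by (relation "measures [\<lambda>(n, d, i). n - i, \<lambda>(n, d, i). d i]") auto

definition mq_step :: "nat \<Rightarrow> nat pmf \<Rightarrow> (nat \<Rightarrow> nat) \<Rightarrow> (nat \<Rightarrow> nat) pmf" where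
  "mq_step n \<sigma> d = bind_pmf \<sigma> (\<lambda>i. mq_trans n d i)"

definition mq_P :: "nat \<Rightarrow> nat pmf \<Rightarrow> (nat \<Rightarrow> nat) \<Rightarrow> (nat \<Rightarrow> nat) \<Rightarrow> real" where
  "mq_P n \<sigma> d d' = pmf (mq_step n \<sigma> d) d'"

definition mq_stationary :: "nat \<Rightarrow> nat pmf \<Rightarrow> (nat \<Rightarrow> nat) pmf \<Rightarrow> bool" where
  "mq_stationary n \<sigma> \<pi> \<longleftrightarrow> bind_pmf \<pi> (mq_step n \<sigma>) = \<pi>"

end

theory Submission
  imports Defs
begin

text \<open>
  Let \<open>q\<^sub>i = i / (n \<sigma>\<^sub>\<le>\<^sub>i)\<close>, so that the \<open>i\<close>-th coordinate of \<pi> is \<open>Geom(1 - q\<^sub>i)\<close>, and start a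
  transition in \<pi>. By induction on \<open>m < n\<close>: among the transitions with \<open>i* \<le> m\<close>, those that end at
  an index \<open>\<le> m\<close> end in \<open>d'\<close> with probability \<open>(m/n) \<pi>(d')\<close>, and those that move on to index
  \<open>m + 1\<close> do so in state \<open>d\<close> with probability \<open>\<sigma>\<^sub>\<le>\<^sub>m \<pi>(d) [d\<^sub>m = 0]\<close>. The induction step is a
  balance equation at index \<open>m\<close> that involves only the coordinates \<open>m - 1\<close> and \<open>m\<close> of \<pi>; it is a
  generating-function identity for two geometric distributions, and it holds because
  \<open>q\<^sub>m \<sigma>\<^sub>\<le>\<^sub>m = m/n\<close>. Index \<open>n\<close> contributes the remaining \<open>\<pi>(d')/n\<close>.
\<close>

declare mq_trans.simps [simp del]

lemma nn_integral_count_space_nat_antidiagonal: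
  fixes f :: "nat \<Rightarrow> nat \<Rightarrow> ennreal"
  shows "(\<integral>\<^sup>+a. \<integral>\<^sup>+t. f a t \<partial>count_space UNIV \<partial>count_space UNIV)
       = (\<integral>\<^sup>+c. (\<Sum>a\<le>c. f a (c - a)) \<partial>count_space UNIV)"
proof -
  let ?S = "{(c, a). a \<le> (c::nat)}"
  let ?h = "\<lambda>(c, a). f a (c - a)"
  have bij: "bij_betw (\<lambda>(a, t). (a + t, a)) UNIV ?S"
    by (rule bij_betwI[where g = "\<lambda>(c, a). (a, c - a)"]) auto
  have "(\<integral>\<^sup>+a. \<integral>\<^sup>+t. f a t \<partial>count_space UNIV \<partial>count_space UNIV)
      = (\<integral>\<^sup>+p. (\<lambda>(a, t). f a t) p \<partial>count_space UNIV)"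
    using nn_integral_fst_count_space[of "\<lambda>(a, t). f a t"] by simp
  also have "\<dots> = (\<integral>\<^sup>+p. ?h ((\<lambda>(a, t). (a + t, a)) p) \<partial>count_space UNIV)"
    by (intro nn_integral_cong) auto
  also have "\<dots> = (\<integral>\<^sup>+p. ?h p \<partial>count_space ?S)"
    by (rule nn_integral_bij_count_space[OF bij])
  also have "\<dots> = (\<integral>\<^sup>+p. ?h p * indicator ?S p \<partial>count_space UNIV)"
    by (simp add: nn_integral_count_space_indicator)
  also have "\<dots> = (\<integral>\<^sup>+c. \<integral>\<^sup>+a. f a (c - a) * indicator {..c} a \<partial>count_space UNIV \<partial>count_space UNIV)"
    by (subst nn_integral_fst_count_space[symmetric])
       (auto intro!: nn_integral_cong split: split_indicator)
  also have "\<dots> = (\<integral>\<^sup>+c. (\<Sum>a\<le>c. f a (c - a)) \<partial>count_space UNIV)"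
    by (simp add: nn_integral_count_space_indicator[symmetric] nn_integral_count_space_finite)
  finally show ?thesis .
qed

lemma nn_integral_count_space_nat_lessThan:
  fixes H :: "nat \<Rightarrow> nat \<Rightarrow> ennreal"
  shows "(\<integral>\<^sup>+b. (\<Sum>t<b. H t b) \<partial>count_space UNIV)
       = (\<integral>\<^sup>+t. \<integral>\<^sup>+u. H t (t + 1 + u) \<partial>count_space UNIV \<partial>count_space UNIV)"
proof -
  have "(\<integral>\<^sup>+b. (\<Sum>t<b. H t b) \<partial>count_space UNIV) = (\<integral>\<^sup>+b. (\<Sum>t<Suc b. H t (Suc b)) \<partial>count_space UNIV)"
    unfolding nn_integral_count_space_nat
    using suminf_offset[of "\<lambda>b. \<Sum>t<b. H t b" 1] by (simp add: summableI)
  also have "\<dots> = (\<integral>\<^sup>+b. (\<Sum>t\<le>b. H t (t + 1 + (b - t))) \<partial>count_space UNIV)"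
    by (intro nn_integral_cong sum.cong) (auto simp: lessThan_Suc_atMost)
  also have "\<dots> = (\<integral>\<^sup>+t. \<integral>\<^sup>+u. H t (t + 1 + u) \<partial>count_space UNIV \<partial>count_space UNIV)"
    by (rule nn_integral_count_space_nat_antidiagonal[symmetric])
  finally show ?thesis .
qed

lemma sum_antidiagonal_powers_weighted:
  fixes x y s\<^sub>0 s\<^sub>1 :: "'a::comm_semiring_1"
  assumes "x * s\<^sub>1 = (s\<^sub>0 + s\<^sub>1) * y"
  shows "(\<Sum>a\<le>c. x ^ a * (s\<^sub>0 + (if a = 0 then s\<^sub>1 else 0)) * y ^ (c - a)) = (s\<^sub>0 + s\<^sub>1) * x ^ c"
proof (induction c)
  case (Suc c)
  have "(\<Sum>a\<le>Suc c. x ^ a * (s\<^sub>0 + (if a = 0 then s\<^sub>1 else 0)) * y ^ (Suc c - a))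
      = y * (\<Sum>a\<le>c. x ^ a * (s\<^sub>0 + (if a = 0 then s\<^sub>1 else 0)) * y ^ (c - a)) + x ^ Suc c * s\<^sub>0"
    by (simp add: sum_distrib_left Suc_diff_le mult_ac)
  also have "\<dots> = x ^ c * (x * s\<^sub>1) + x ^ Suc c * s\<^sub>0"
    using Suc assms by (simp add: mult_ac)
  finally show ?case
    by (simp add: algebra_simps)
qed simp

lemma nn_integral_antidiagonal_powers_weighted:
  fixes x y s\<^sub>0 s\<^sub>1 :: ennreal and F :: "nat \<Rightarrow> ennreal"
  assumes "x * s\<^sub>1 = (s\<^sub>0 + s\<^sub>1) * y"
  shows "(\<integral>\<^sup>+a. \<integral>\<^sup>+t. x ^ a * (s\<^sub>0 + (if a = 0 then s\<^sub>1 else 0)) * y ^ t * F (a + t)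
            \<partial>count_space UNIV \<partial>count_space UNIV)
       = (s\<^sub>0 + s\<^sub>1) * (\<integral>\<^sup>+c. x ^ c * F c \<partial>count_space UNIV)"
proof -
  have "(\<integral>\<^sup>+a. \<integral>\<^sup>+t. x ^ a * (s\<^sub>0 + (if a = 0 then s\<^sub>1 else 0)) * y ^ t * F (a + t)
            \<partial>count_space UNIV \<partial>count_space UNIV)
      = (\<integral>\<^sup>+c. (\<Sum>a\<le>c. x ^ a * (s\<^sub>0 + (if a = 0 then s\<^sub>1 else 0)) * y ^ (c - a)) * F c
            \<partial>count_space UNIV)"
    by (simp add: nn_integral_count_space_nat_antidiagonal sum_distrib_right)
  also have "\<dots> = (\<integral>\<^sup>+c. (s\<^sub>0 + s\<^sub>1) * (x ^ c * F c) \<partial>count_space UNIV)"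
    by (subst sum_antidiagonal_powers_weighted[OF assms]) (simp add: mult.assoc)
  finally show ?thesis
    by (simp add: nn_integral_cmult)
qed

lemma nn_integral_geometric_pmf:
  assumes "0 \<le> q" "q < 1"
  shows "(\<integral>\<^sup>+k. f k \<partial>geometric_pmf (1 - q))
       = ennreal (1 - q) * (\<integral>\<^sup>+k. ennreal q ^ k * f k \<partial>count_space UNIV)"
  using assms
  by (simp add: nn_integral_measure_pmf nn_integral_cmult[symmetric] ennreal_mult' ennreal_power
      mult_ac)

lemma nn_integral_geometric_pmf_pair:
  assumes "0 \<le> x" "x < 1" "0 \<le> q" "q < 1"
  shows "(\<integral>\<^sup>+a. \<integral>\<^sup>+b. f a b \<partial>geometric_pmf (1 - q) \<partial>geometric_pmf (1 - x))
       = ennreal (1 - x) * ennreal (1 - q) *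
           (\<integral>\<^sup>+a. \<integral>\<^sup>+b. ennreal x ^ a * ennreal q ^ b * f a b \<partial>count_space UNIV \<partial>count_space UNIV)"
  using assms by (simp add: nn_integral_geometric_pmf nn_integral_cmult[symmetric] mult_ac)

lemma nn_integral_sweep_end:
  fixes X Q r e s\<^sub>0 s\<^sub>1 :: ennreal and I :: "nat \<Rightarrow> nat \<Rightarrow> ennreal"
  assumes rate: "X * s\<^sub>1 = (s\<^sub>0 + s\<^sub>1) * (Q * r)"
  shows "(\<integral>\<^sup>+a. \<integral>\<^sup>+b. X ^ a * Q ^ b *
              ((s\<^sub>0 + (if a = 0 then s\<^sub>1 else 0)) * (\<Sum>t<b. r ^ t * e * I (a + t) (b - t - 1)))
            \<partial>count_space UNIV \<partial>count_space UNIV)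
       = Q * (s\<^sub>0 + s\<^sub>1) * e *
           (\<integral>\<^sup>+a. \<integral>\<^sup>+b. X ^ a * Q ^ b * I a b \<partial>count_space UNIV \<partial>count_space UNIV)"
proof -
  define J where "J c = (\<integral>\<^sup>+u. Q ^ u * I c u \<partial>count_space UNIV)" for c
  have "(\<integral>\<^sup>+a. \<integral>\<^sup>+b. X ^ a * Q ^ b *
            ((s\<^sub>0 + (if a = 0 then s\<^sub>1 else 0)) * (\<Sum>t<b. r ^ t * e * I (a + t) (b - t - 1)))
          \<partial>count_space UNIV \<partial>count_space UNIV)
      = (\<integral>\<^sup>+a. \<integral>\<^sup>+t. \<integral>\<^sup>+u. X ^ a * Q ^ (t + 1 + u) *
            ((s\<^sub>0 + (if a = 0 then s\<^sub>1 else 0)) * (r ^ t * e * I (a + t) u))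
          \<partial>count_space UNIV \<partial>count_space UNIV \<partial>count_space UNIV)"
    by (simp add: sum_distrib_left nn_integral_count_space_nat_lessThan)
  also have "\<dots> = Q * e *
      (\<integral>\<^sup>+a. \<integral>\<^sup>+t. X ^ a * (s\<^sub>0 + (if a = 0 then s\<^sub>1 else 0)) * (Q * r) ^ t * J (a + t)
        \<partial>count_space UNIV \<partial>count_space UNIV)"
    by (simp add: J_def nn_integral_cmult[symmetric] power_add power_mult_distrib mult_ac)
  also have "\<dots> = Q * e * ((s\<^sub>0 + s\<^sub>1) * (\<integral>\<^sup>+c. X ^ c * J c \<partial>count_space UNIV))"
    by (simp only: nn_integral_antidiagonal_powers_weighted[OF rate])
  finally show ?thesis
    by (simp add: J_def nn_integral_cmult[symmetric] mult_ac)
qed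

lemma nn_integral_sweep_pass:
  fixes X Q r s\<^sub>0 s\<^sub>1 :: ennreal and M :: "nat \<Rightarrow> ennreal"
  assumes rate: "X * s\<^sub>1 = (s\<^sub>0 + s\<^sub>1) * (Q * r)"
  shows "(\<integral>\<^sup>+a. \<integral>\<^sup>+b. X ^ a * Q ^ b * ((s\<^sub>0 + (if a = 0 then s\<^sub>1 else 0)) * (r ^ b * M (a + b)))
            \<partial>count_space UNIV \<partial>count_space UNIV)
       = (s\<^sub>0 + s\<^sub>1) * (\<integral>\<^sup>+a. X ^ a * M a \<partial>count_space UNIV)"
  using nn_integral_antidiagonal_powers_weighted[OF rate, of M]
  by (simp add: power_mult_distrib mult_ac)

text \<open>From the coordinates \<open>(a, b)\<close> at \<open>(j - 1, j)\<close>, a transition in state \<open>(d, j)\<close> ends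
  after \<open>t < b\<close> moves with probability \<open>r\<^sup>t e\<close>, where \<open>e = 1/j\<close> and \<open>r = 1 - e\<close>, at
  \<open>(a + t, b - t - 1)\<close> (term \<open>I\<close>), or makes all \<open>b\<close> moves and continues at index \<open>j + 1\<close>
  from \<open>(a + b, 0)\<close> (term \<open>M\<close>).\<close>
lemma geometric_pair_balance:
  fixes x q :: real and r e s\<^sub>0 s\<^sub>1 :: ennreal
    and I :: "nat \<Rightarrow> nat \<Rightarrow> ennreal" and M :: "nat \<Rightarrow> ennreal"
  assumes x: "0 \<le> x" "x < 1" and q: "0 \<le> q" "q < 1"
    and rate: "ennreal x * s\<^sub>1 = (s\<^sub>0 + s\<^sub>1) * (ennreal q * r)"
  shows "(\<integral>\<^sup>+a. \<integral>\<^sup>+b. (s\<^sub>0 + (if a = 0 then s\<^sub>1 else 0)) *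
             ((\<Sum>t<b. r ^ t * e * I (a + t) (b - t - 1)) + r ^ b * M (a + b))
           \<partial>geometric_pmf (1 - q) \<partial>geometric_pmf (1 - x))
       = (\<integral>\<^sup>+a. \<integral>\<^sup>+b. ennreal q * (s\<^sub>0 + s\<^sub>1) * e * I a b + (s\<^sub>0 + s\<^sub>1) * indicator {0} b * M a
           \<partial>geometric_pmf (1 - q) \<partial>geometric_pmf (1 - x))"
proof -
  define X Q s where "X = ennreal x" and "Q = ennreal q" and "s = s\<^sub>0 + s\<^sub>1"
  have at_0: "(\<integral>\<^sup>+b. X ^ a * Q ^ b * (s * indicator {0} b * M a) \<partial>count_space UNIV)
      = s * (X ^ a * M a)" for a
    using nn_integral_indicator_singleton[of 0 "count_space UNIV" "\<lambda>b. X ^ a * Q ^ b * s * M a"]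
    by (simp add: mult_ac)
  have "(\<integral>\<^sup>+a. \<integral>\<^sup>+b. X ^ a * Q ^ b * (Q * s * e * I a b) \<partial>count_space UNIV \<partial>count_space UNIV)
      = Q * s * e * (\<integral>\<^sup>+a. \<integral>\<^sup>+b. X ^ a * Q ^ b * I a b \<partial>count_space UNIV \<partial>count_space UNIV)"
    by (simp add: nn_integral_cmult[symmetric] mult_ac)
  moreover have "(\<integral>\<^sup>+a. \<integral>\<^sup>+b. X ^ a * Q ^ b * (s * indicator {0} b * M a)
                     \<partial>count_space UNIV \<partial>count_space UNIV)
      = s * (\<integral>\<^sup>+a. X ^ a * M a \<partial>count_space UNIV)"
    unfolding at_0 by (rule nn_integral_cmult) simp
  ultimately have rhs: "(\<integral>\<^sup>+a. \<integral>\<^sup>+b. X ^ a * Q ^ b * (Q * s * e * I a b + s * indicator {0} b * M a)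
                            \<partial>count_space UNIV \<partial>count_space UNIV)
      = Q * s * e * (\<integral>\<^sup>+a. \<integral>\<^sup>+b. X ^ a * Q ^ b * I a b \<partial>count_space UNIV \<partial>count_space UNIV)
        + s * (\<integral>\<^sup>+a. X ^ a * M a \<partial>count_space UNIV)"
    by (simp add: distrib_left nn_integral_add)
  have "(\<integral>\<^sup>+a. \<integral>\<^sup>+b. X ^ a * Q ^ b * ((s\<^sub>0 + (if a = 0 then s\<^sub>1 else 0)) *
            ((\<Sum>t<b. r ^ t * e * I (a + t) (b - t - 1)) + r ^ b * M (a + b)))
          \<partial>count_space UNIV \<partial>count_space UNIV)
      = (\<integral>\<^sup>+a. \<integral>\<^sup>+b. X ^ a * Q ^ b *
            ((s\<^sub>0 + (if a = 0 then s\<^sub>1 else 0)) * (\<Sum>t<b. r ^ t * e * I (a + t) (b - t - 1)))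
          \<partial>count_space UNIV \<partial>count_space UNIV)
        + (\<integral>\<^sup>+a. \<integral>\<^sup>+b. X ^ a * Q ^ b * ((s\<^sub>0 + (if a = 0 then s\<^sub>1 else 0)) * (r ^ b * M (a + b)))
          \<partial>count_space UNIV \<partial>count_space UNIV)"
    by (simp add: distrib_left nn_integral_add)
  also have "\<dots> = (\<integral>\<^sup>+a. \<integral>\<^sup>+b. X ^ a * Q ^ b * (Q * s * e * I a b + s * indicator {0} b * M a)
                    \<partial>count_space UNIV \<partial>count_space UNIV)"
    unfolding rhs unfolding s_def X_def Q_def
    unfolding nn_integral_sweep_end[OF rate] nn_integral_sweep_pass[OF rate] ..
  finally show ?thesis
    unfolding nn_integral_geometric_pmf_pair[OF x q] X_def Q_def s_def by simp
qed

lemma geometric_last_balance: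
  fixes x y :: real and s\<^sub>0 s\<^sub>1 :: ennreal and I :: "nat \<Rightarrow> ennreal"
  assumes x: "0 \<le> x" "x < 1" and y: "0 \<le> y" "y < 1"
    and rate: "ennreal x * s\<^sub>1 = (s\<^sub>0 + s\<^sub>1) * ennreal y"
  shows "(\<integral>\<^sup>+a. (s\<^sub>0 + (if a = 0 then s\<^sub>1 else 0)) * (\<integral>\<^sup>+k. I (a + k) \<partial>geometric_pmf (1 - y))
           \<partial>geometric_pmf (1 - x))
       = (\<integral>\<^sup>+a. (s\<^sub>0 + s\<^sub>1) * ennreal (1 - y) * I a \<partial>geometric_pmf (1 - x))"
proof -
  have "(\<integral>\<^sup>+a. ennreal x ^ a *
            ((s\<^sub>0 + (if a = 0 then s\<^sub>1 else 0)) * (\<integral>\<^sup>+k. I (a + k) \<partial>geometric_pmf (1 - y)))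
          \<partial>count_space UNIV)
      = ennreal (1 - y) *
          (\<integral>\<^sup>+a. \<integral>\<^sup>+k.
              ennreal x ^ a * (s\<^sub>0 + (if a = 0 then s\<^sub>1 else 0)) * ennreal y ^ k * I (a + k)
            \<partial>count_space UNIV \<partial>count_space UNIV)"
    using y by (simp add: nn_integral_geometric_pmf nn_integral_cmult[symmetric] mult_ac)
  also have "\<dots> = ennreal (1 - y) * ((s\<^sub>0 + s\<^sub>1) * (\<integral>\<^sup>+a. ennreal x ^ a * I a \<partial>count_space UNIV))"
    by (simp only: nn_integral_antidiagonal_powers_weighted[OF rate])
  finally show ?thesis
    using x by (simp add: nn_integral_geometric_pmf nn_integral_cmult[symmetric] mult_ac)
qed

lemma nn_integral_pmf_commute:
  fixes f :: "'a \<Rightarrow> 'b \<Rightarrow> ennreal" and A :: "'a pmf" and B :: "'b pmf"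
  shows "(\<integral>\<^sup>+a. \<integral>\<^sup>+b. f a b \<partial>B \<partial>A) = (\<integral>\<^sup>+b. \<integral>\<^sup>+a. f a b \<partial>A \<partial>B)"
proof -
  have "(\<integral>\<^sup>+a. \<integral>\<^sup>+b. f a b \<partial>B \<partial>A) = (\<integral>\<^sup>+p. f (fst p) (snd p) \<partial>pair_pmf A B)"
    by (simp add: nn_integral_pair_pmf')
  also have "\<dots> = (\<integral>\<^sup>+p. f (snd p) (fst p) \<partial>pair_pmf B A)"
    by (subst pair_commute_pmf) (simp add: case_prod_beta)
  finally show ?thesis
    by (simp add: nn_integral_pair_pmf')
qed

lemma nn_integral_Pi_pmf_insert:
  assumes "finite A" "x \<notin> A"
  shows "(\<integral>\<^sup>+f. F f \<partial>Pi_pmf (insert x A) dflt p)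
       = (\<integral>\<^sup>+f. \<integral>\<^sup>+y. F (f(x := y)) \<partial>p x \<partial>Pi_pmf A dflt p)"
  using assms
  by (simp add: Pi_pmf_insert nn_integral_pair_pmf' nn_integral_pmf_commute[of _ "Pi_pmf A dflt p"])

lemma nn_integral_Pi_pmf_remove:
  assumes "finite A" "i \<in> A"
  shows "(\<integral>\<^sup>+f. F f \<partial>Pi_pmf A dflt p) = (\<integral>\<^sup>+f. \<integral>\<^sup>+y. F (f(i := y)) \<partial>p i \<partial>Pi_pmf (A - {i}) dflt p)"
  using assms nn_integral_Pi_pmf_insert[of "A - {i}" i] by (simp add: insert_absorb)

lemma nn_integral_Pi_pmf_remove2:
  assumes "finite A" "i \<in> A" "k \<in> A" "i \<noteq> k"
  shows "(\<integral>\<^sup>+f. F f \<partial>Pi_pmf A dflt p)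
       = (\<integral>\<^sup>+f. \<integral>\<^sup>+y. \<integral>\<^sup>+z. F (f(k := z, i := y)) \<partial>p k \<partial>p i \<partial>Pi_pmf (A - {i, k}) dflt p)"
proof -
  have "A - {i} - {k} = A - {i, k}"
    by blast
  then show ?thesis
    using assms
    by (simp add: nn_integral_Pi_pmf_remove[of A i] nn_integral_Pi_pmf_remove[of "A - {i}" k]
        nn_integral_pmf_commute[of _ "p i"])
qed

lemma mq_trans_skip:
  "1 \<le> j \<Longrightarrow> j < n \<Longrightarrow> d j = 0 \<Longrightarrow> mq_trans n d j = mq_trans n d (Suc j)"
  by (rule trans[OF mq_trans.simps]) simp

lemma mq_trans_step:
  "1 \<le> j \<Longrightarrow> j < n \<Longrightarrow> 0 < d j \<Longrightarrow> mq_trans n d j =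
     bernoulli_pmf (1 / real j) \<bind>
       (\<lambda>b. if b then return_pmf (d(j := d j - 1))
            else mq_trans n (d(j := d j - 1, j - 1 := d (j - 1) + 1)) j)"
  by (rule trans[OF mq_trans.simps]) simp

lemma mq_trans_last:
  "1 \<le> n \<Longrightarrow>
     mq_trans n d n = map_pmf (\<lambda>k. d(n - 1 := d (n - 1) + k)) (geometric_pmf (1 / real n))"
  by (rule trans[OF mq_trans.simps]) simp

lemma ennreal_pmf_mq_trans_sweep:
  fixes r e :: ennreal
  assumes j: "1 \<le> j" "j < n"
  defines "r \<equiv> ennreal (1 - 1 / real j)" and "e \<equiv> ennreal (1 / real j)"
  shows "ennreal (pmf (mq_trans n (g(j := b, j - 1 := a)) j) d') =
           (\<Sum>t<b. r ^ t * e * indicator {g(j := b - t - 1, j - 1 := a + t)} d')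
           + r ^ b * ennreal (pmf (mq_trans n (g(j := 0, j - 1 := a + b)) (Suc j)) d')"
proof (induction b arbitrary: a)
  case 0
  show ?case
    using j by (simp add: mq_trans_skip)
next
  case (Suc b)
  have "j - 1 \<noteq> j"
    using j by simp
  then have "ennreal (pmf (mq_trans n (g(j := Suc b, j - 1 := a)) j) d')
      = e * indicator {g(j := b, j - 1 := a)} d'
        + r * ennreal (pmf (mq_trans n (g(j := b, j - 1 := Suc a)) j) d')"
    using j unfolding r_def e_def
    by (subst mq_trans_step)
       (simp_all add: ennreal_pmf_bind fun_upd_twist[of "j - Suc 0" j] mult_ac
          split: split_indicator)
  also have "\<dots> = (\<Sum>t<Suc b. r ^ t * e * indicator {g(j := Suc b - t - 1, j - 1 := a + t)} d')
           + r ^ Suc b * ennreal (pmf (mq_trans n (g(j := 0, j - 1 := a + Suc b)) (Suc j)) d')"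
    unfolding Suc sum.lessThan_Suc_shift by (simp add: distrib_left sum_distrib_left mult_ac)
  finally show ?case .
qed

lemma ennreal_pmf_mq_trans_last:
  assumes "1 \<le> n"
  shows "ennreal (pmf (mq_trans n (g(n - 1 := a)) n) d')
       = (\<integral>\<^sup>+k. indicator {g(n - 1 := a + k)} d' \<partial>geometric_pmf (1 / real n))"
  unfolding mq_trans_last[OF assms] ennreal_pmf_map
  by (intro nn_integral_cong) (simp split: split_indicator)

locale multiqueue =
  fixes n :: nat and \<sigma> :: "nat pmf"
  assumes set_pmf_subset: "set_pmf \<sigma> \<subseteq> {1..n}"
    and prefix_prob_gt: "\<forall>i\<in>{1..n-1}. measure_pmf.prob \<sigma> {..i} > real i / real n"
begin

definition sigma_le :: "nat \<Rightarrow> real" where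
  "sigma_le i = measure_pmf.prob \<sigma> {..i}"

definition ratio :: "nat \<Rightarrow> real" where
  "ratio i = real i / (real n * sigma_le i)"

definition marginal :: "nat \<Rightarrow> nat pmf" where
  "marginal i = geometric_pmf (1 - ratio i)"

text \<open>Coordinate 0 is \<open>Geom(1)\<close>, the point mass at 0, so the lower neighbour of every index
  \<open>j \<ge> 1\<close> is a coordinate as well.\<close>
definition stat :: "(nat \<Rightarrow> nat) pmf" where
  "stat = Pi_pmf {..<n} 0 marginal"

lemma n_ge_1: "1 \<le> n"
  using set_pmf_subset set_pmf_not_empty[of \<sigma>] by fastforce

lemma sigma_le_eq_sum: "sigma_le i = (\<Sum>k\<le>i. pmf \<sigma> k)"
  unfolding sigma_le_def by (simp add: measure_measure_pmf_finite)

lemma sigma_le_0: "sigma_le 0 = 0"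
  using set_pmf_subset by (auto simp: sigma_le_eq_sum set_pmf_iff)

lemma sigma_le_n: "sigma_le n = 1"
  unfolding sigma_le_eq_sum using set_pmf_subset by (intro sum_pmf_eq_1) auto

lemma sigma_le_step: "1 \<le> j \<Longrightarrow> sigma_le j = pmf \<sigma> j + sigma_le (j - 1)"
  unfolding sigma_le_eq_sum by (cases j) (auto simp: atMost_Suc)

lemma sigma_le_nonneg: "0 \<le> sigma_le i"
  unfolding sigma_le_eq_sum by (simp add: sum_nonneg)

lemma sigma_le_gt: "1 \<le> i \<Longrightarrow> i < n \<Longrightarrow> real i / real n < sigma_le i"
  using prefix_prob_gt unfolding sigma_le_def by auto

lemma ratio_times_sigma_le: "i < n \<Longrightarrow> ratio i * sigma_le i = real i / real n"
proof (cases "i = 0")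
  case False
  moreover assume "i < n"
  ultimately have "0 < sigma_le i"
    using sigma_le_gt[of i] divide_nonneg_nonneg[of "real i" "real n"] by linarith
  then show ?thesis
    by (simp add: ratio_def)
qed (simp add: ratio_def)

lemma ratio_nonneg: "0 \<le> ratio i"
  unfolding ratio_def using sigma_le_nonneg by simp

lemma ratio_less_1: "i < n \<Longrightarrow> ratio i < 1"
proof (cases "i = 0")
  case False
  moreover assume "i < n"
  ultimately have "real i / real n < sigma_le i"
    by (simp add: sigma_le_gt)
  then show ?thesis
    using n_ge_1 by (simp add: ratio_def divide_less_eq field_simps)
qed (simp add: ratio_def)


lemma stat_eq_Pi_pmf: "stat = Pi_pmf {1..n-1} 0 marginal"
  unfolding stat_def by (rule Pi_pmf_subset') (auto simp: marginal_def ratio_def Suc_le_eq)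

lemma nn_integral_stat_pair:
  assumes "1 \<le> j" "j < n"
  shows "(\<integral>\<^sup>+d. F d \<partial>stat) = (\<integral>\<^sup>+g. \<integral>\<^sup>+a. \<integral>\<^sup>+b. F (g(j := b, j - 1 := a))
            \<partial>marginal j \<partial>marginal (j - 1) \<partial>Pi_pmf ({..<n} - {j - 1, j}) 0 marginal)"
  unfolding stat_def using assms by (intro nn_integral_Pi_pmf_remove2) auto

lemma nn_integral_stat_last:
  "(\<integral>\<^sup>+d. F d \<partial>stat) = (\<integral>\<^sup>+g. \<integral>\<^sup>+a. F (g(n - 1 := a))
            \<partial>marginal (n - 1) \<partial>Pi_pmf ({..<n} - {n - 1}) 0 marginal)"
  unfolding stat_def using n_ge_1 by (intro nn_integral_Pi_pmf_remove) auto

lemma ennreal_sigma_le_step: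
  "1 \<le> j \<Longrightarrow> ennreal (pmf \<sigma> j) + ennreal (sigma_le (j - 1)) = ennreal (sigma_le j)"
  using sigma_le_step[of j] sigma_le_nonneg by (simp flip: ennreal_plus)

lemma ennreal_ratio_pred_times_sigma_le:
  assumes "1 \<le> j" "j < n"
  shows "ennreal (ratio (j - 1)) * ennreal (sigma_le (j - 1))
       = ennreal (sigma_le j) * (ennreal (ratio j) * ennreal (1 - 1 / real j))"
proof -
  have "ratio (j - 1) * sigma_le (j - 1) = (real j - 1) / real n"
    using ratio_times_sigma_le[of "j - 1"] assms by (simp add: of_nat_diff)
  also have "\<dots> = sigma_le j * (ratio j * (1 - 1 / real j))"
    using ratio_times_sigma_le[of j] assms by (simp add: field_simps)
  finally show ?thesis
    using ratio_nonneg sigma_le_nonneg by (simp add: ennreal_mult'[symmetric])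
qed

lemma ennreal_ratio_times_sigma_le_div:
  assumes "1 \<le> j" "j < n"
  shows "ennreal (ratio j) * ennreal (sigma_le j) * ennreal (1 / real j) = ennreal (1 / real n)"
proof -
  have "ratio j * sigma_le j * (1 / real j) = 1 / real n"
    using ratio_times_sigma_le[of j] assms by simp
  then show ?thesis
    using ratio_nonneg sigma_le_nonneg by (simp add: ennreal_mult'[symmetric])
qed

lemma marginal_pair_balance:
  assumes j: "1 \<le> j" "j < n"
  shows "(\<integral>\<^sup>+a. \<integral>\<^sup>+b. (ennreal (pmf \<sigma> j) + (if a = 0 then ennreal (sigma_le (j - 1)) else 0))
              * pmf (mq_trans n (g(j := b, j - 1 := a)) j) d' \<partial>marginal j \<partial>marginal (j - 1))
       = (\<integral>\<^sup>+a. \<integral>\<^sup>+b. ennreal (1 / real n) * indicator {d'} (g(j := b, j - 1 := a))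
              + ennreal (sigma_le j) * indicator {0} b
                * pmf (mq_trans n (g(j := b, j - 1 := a)) (Suc j)) d'
            \<partial>marginal j \<partial>marginal (j - 1))"
proof -
  define s\<^sub>0 s\<^sub>1 where "s\<^sub>0 = ennreal (pmf \<sigma> j)" and "s\<^sub>1 = ennreal (sigma_le (j - 1))"
  define r e where "r = ennreal (1 - 1 / real j)" and "e = ennreal (1 / real j)"
  define I :: "nat \<Rightarrow> nat \<Rightarrow> ennreal" where "I a b = indicator {g(j := b, j - 1 := a)} d'" for a b
  define M where "M a = ennreal (pmf (mq_trans n (g(j := 0, j - 1 := a)) (Suc j)) d')" for a
  have s: "s\<^sub>0 + s\<^sub>1 = ennreal (sigma_le j)"
    unfolding s\<^sub>0_def s\<^sub>1_def by (rule ennreal_sigma_le_step[OF j(1)])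
  have rate: "ennreal (ratio (j - 1)) * s\<^sub>1 = (s\<^sub>0 + s\<^sub>1) * (ennreal (ratio j) * r)"
    unfolding s unfolding s\<^sub>1_def r_def by (rule ennreal_ratio_pred_times_sigma_le[OF j])
  have "(\<integral>\<^sup>+a. \<integral>\<^sup>+b. (s\<^sub>0 + (if a = 0 then s\<^sub>1 else 0))
              * pmf (mq_trans n (g(j := b, j - 1 := a)) j) d' \<partial>marginal j \<partial>marginal (j - 1))
      = (\<integral>\<^sup>+a. \<integral>\<^sup>+b. (s\<^sub>0 + (if a = 0 then s\<^sub>1 else 0)) *
             ((\<Sum>t<b. r ^ t * e * I (a + t) (b - t - 1)) + r ^ b * M (a + b))
            \<partial>geometric_pmf (1 - ratio j) \<partial>geometric_pmf (1 - ratio (j - 1)))"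
    unfolding marginal_def
    by (intro nn_integral_cong, subst ennreal_pmf_mq_trans_sweep[OF j])
       (simp add: r_def e_def I_def M_def)
  also have "\<dots> = (\<integral>\<^sup>+a. \<integral>\<^sup>+b. ennreal (ratio j) * (s\<^sub>0 + s\<^sub>1) * e * I a b
              + (s\<^sub>0 + s\<^sub>1) * indicator {0} b * M a
            \<partial>geometric_pmf (1 - ratio j) \<partial>geometric_pmf (1 - ratio (j - 1)))"
    using j
    by (intro geometric_pair_balance[OF ratio_nonneg _ ratio_nonneg _ rate] ratio_less_1) auto
  also have "\<dots> = (\<integral>\<^sup>+a. \<integral>\<^sup>+b. ennreal (1 / real n) * indicator {d'} (g(j := b, j - 1 := a))
              + ennreal (sigma_le j) * indicator {0} b
                * pmf (mq_trans n (g(j := b, j - 1 := a)) (Suc j)) d'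
            \<partial>marginal j \<partial>marginal (j - 1))"
    unfolding marginal_def s ennreal_ratio_times_sigma_le_div[OF j, folded e_def]
    by (intro nn_integral_cong) (simp add: I_def M_def split: split_indicator)
  finally show ?thesis
    unfolding s\<^sub>0_def s\<^sub>1_def .
qed

lemma marginal_last_balance:
  "(\<integral>\<^sup>+a. (ennreal (pmf \<sigma> n) + (if a = 0 then ennreal (sigma_le (n - 1)) else 0))
        * pmf (mq_trans n (g(n - 1 := a)) n) d' \<partial>marginal (n - 1))
   = (\<integral>\<^sup>+a. ennreal (1 / real n) * indicator {d'} (g(n - 1 := a)) \<partial>marginal (n - 1))"
proof -
  define s\<^sub>0 s\<^sub>1 where "s\<^sub>0 = ennreal (pmf \<sigma> n)" and "s\<^sub>1 = ennreal (sigma_le (n - 1))"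
  define y where "y = 1 - 1 / real n"
  define I :: "nat \<Rightarrow> ennreal" where "I a = indicator {g(n - 1 := a)} d'" for a
  have y: "0 \<le> y" "y < 1"
    using n_ge_1 by (auto simp: y_def)
  have s: "s\<^sub>0 + s\<^sub>1 = 1"
    unfolding s\<^sub>0_def s\<^sub>1_def ennreal_sigma_le_step[OF n_ge_1] sigma_le_n by simp
  have rate: "ennreal (ratio (n - 1)) * s\<^sub>1 = (s\<^sub>0 + s\<^sub>1) * ennreal y"
  proof -
    have "ratio (n - 1) * sigma_le (n - 1) = y"
      using ratio_times_sigma_le[of "n - 1"] n_ge_1 by (simp add: y_def of_nat_diff field_simps)
    then have "ennreal (ratio (n - 1)) * ennreal (sigma_le (n - 1)) = ennreal y"
      using ratio_nonneg by (simp add: ennreal_mult'[symmetric])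
    then show ?thesis
      unfolding s mult_1 unfolding s\<^sub>1_def .
  qed
  have "(\<integral>\<^sup>+a. (s\<^sub>0 + (if a = 0 then s\<^sub>1 else 0)) * pmf (mq_trans n (g(n - 1 := a)) n) d'
            \<partial>marginal (n - 1))
      = (\<integral>\<^sup>+a. (s\<^sub>0 + (if a = 0 then s\<^sub>1 else 0)) * (\<integral>\<^sup>+k. I (a + k) \<partial>geometric_pmf (1 - y))
            \<partial>geometric_pmf (1 - ratio (n - 1)))"
    unfolding marginal_def
    by (intro nn_integral_cong, subst ennreal_pmf_mq_trans_last[OF n_ge_1]) (simp add: I_def y_def)
  also have "\<dots> = (\<integral>\<^sup>+a. (s\<^sub>0 + s\<^sub>1) * ennreal (1 - y) * I a \<partial>geometric_pmf (1 - ratio (n - 1)))"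
    using n_ge_1 by (intro geometric_last_balance[OF ratio_nonneg _ y rate] ratio_less_1) auto
  also have "\<dots> = (\<integral>\<^sup>+a. ennreal (1 / real n) * indicator {d'} (g(n - 1 := a)) \<partial>marginal (n - 1))"
    unfolding marginal_def s
    by (intro nn_integral_cong) (simp add: y_def I_def split: split_indicator)
  finally show ?thesis
    unfolding s\<^sub>0_def s\<^sub>1_def .
qed

definition end_mass :: "(nat \<Rightarrow> nat) \<Rightarrow> nat \<Rightarrow> ennreal" where
  "end_mass d' j = (\<integral>\<^sup>+d. pmf (mq_trans n d j) d' \<partial>stat)"

definition pass_mass :: "(nat \<Rightarrow> nat) \<Rightarrow> nat \<Rightarrow> ennreal" where
  "pass_mass d' j = (\<integral>\<^sup>+d. indicator {0} (d j) * ennreal (pmf (mq_trans n d (Suc j)) d') \<partial>stat)"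

lemma entering_mass:
  assumes "1 \<le> j"
  shows "ennreal (pmf \<sigma> j) * end_mass d' j + ennreal (sigma_le (j - 1)) * pass_mass d' (j - 1)
       = (\<integral>\<^sup>+d. (ennreal (pmf \<sigma> j) + (if d (j - 1) = 0 then ennreal (sigma_le (j - 1)) else 0))
                 * pmf (mq_trans n d j) d' \<partial>stat)"
proof -
  have "ennreal (pmf \<sigma> j) * end_mass d' j + ennreal (sigma_le (j - 1)) * pass_mass d' (j - 1)
      = (\<integral>\<^sup>+d. ennreal (pmf \<sigma> j) * pmf (mq_trans n d j) d'
            + ennreal (sigma_le (j - 1))
                * (indicator {0} (d (j - 1)) * ennreal (pmf (mq_trans n d j) d')) \<partial>stat)"
    using assms by (simp add: end_mass_def pass_mass_def nn_integral_add nn_integral_cmult)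
  also have "\<dots> = (\<integral>\<^sup>+d.
        (ennreal (pmf \<sigma> j) + (if d (j - 1) = 0 then ennreal (sigma_le (j - 1)) else 0))
          * pmf (mq_trans n d j) d' \<partial>stat)"
    by (intro nn_integral_cong) (simp add: distrib_right split: split_indicator)
  finally show ?thesis .
qed

lemma flow_balance:
  assumes j: "1 \<le> j" "j < n"
  shows "ennreal (pmf \<sigma> j) * end_mass d' j + ennreal (sigma_le (j - 1)) * pass_mass d' (j - 1)
       = ennreal (1 / real n) * pmf stat d' + ennreal (sigma_le j) * pass_mass d' j"
proof -
  have "j \<noteq> j - 1"
    using j by simp
  then have "ennreal (pmf \<sigma> j) * end_mass d' j + ennreal (sigma_le (j - 1)) * pass_mass d' (j - 1)
      = (\<integral>\<^sup>+d. ennreal (1 / real n) * indicator {d'} d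
              + ennreal (sigma_le j) * indicator {0} (d j) * pmf (mq_trans n d (Suc j)) d' \<partial>stat)"
    unfolding entering_mass[OF j(1)] nn_integral_stat_pair[OF j]
    using marginal_pair_balance[OF j] by (rule_tac nn_integral_cong) simp
  also have "\<dots> = ennreal (1 / real n) * pmf stat d' + ennreal (sigma_le j) * pass_mass d' j"
    by (simp add: pass_mass_def nn_integral_add nn_integral_cmult emeasure_pmf_single mult.assoc)
  finally show ?thesis .
qed

lemma flow_balance_last:
  "ennreal (pmf \<sigma> n) * end_mass d' n + ennreal (sigma_le (n - 1)) * pass_mass d' (n - 1)
     = ennreal (1 / real n) * pmf stat d'"
proof -
  have "ennreal (pmf \<sigma> n) * end_mass d' n + ennreal (sigma_le (n - 1)) * pass_mass d' (n - 1)
      = (\<integral>\<^sup>+d. ennreal (1 / real n) * indicator {d'} d \<partial>stat)"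
    unfolding entering_mass[OF n_ge_1] nn_integral_stat_last
    using marginal_last_balance by (rule_tac nn_integral_cong) simp
  then show ?thesis
    by (simp add: nn_integral_cmult emeasure_pmf_single)
qed

lemma flow_telescope:
  "m < n \<Longrightarrow> (\<Sum>j = 1..m. ennreal (pmf \<sigma> j) * end_mass d' j)
     = ennreal (real m / real n) * pmf stat d' + ennreal (sigma_le m) * pass_mass d' m"
proof (induction m)
  case 0
  then show ?case
    by (simp add: sigma_le_0)
next
  case (Suc m)
  let ?\<pi> = "ennreal (pmf stat d')"
  have IH: "(\<Sum>j = 1..m. ennreal (pmf \<sigma> j) * end_mass d' j)
      = ennreal (real m / real n) * ?\<pi> + ennreal (sigma_le m) * pass_mass d' m"
    using Suc by simp
  have balance: "ennreal (pmf \<sigma> (Suc m)) * end_mass d' (Suc m)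
        + ennreal (sigma_le m) * pass_mass d' m
      = ennreal (1 / real n) * ?\<pi> + ennreal (sigma_le (Suc m)) * pass_mass d' (Suc m)"
    using flow_balance[of "Suc m" d'] Suc.prems by simp
  have "(\<Sum>j = 1..Suc m. ennreal (pmf \<sigma> j) * end_mass d' j)
      = (\<Sum>j = 1..m. ennreal (pmf \<sigma> j) * end_mass d' j)
        + ennreal (pmf \<sigma> (Suc m)) * end_mass d' (Suc m)"
    by simp
  also have "\<dots> = ennreal (real m / real n) * ?\<pi>
        + (ennreal (pmf \<sigma> (Suc m)) * end_mass d' (Suc m) + ennreal (sigma_le m) * pass_mass d' m)"
    unfolding IH by (simp only: add_ac)
  also have "\<dots> = (ennreal (real m / real n) + ennreal (1 / real n)) * ?\<pi>
        + ennreal (sigma_le (Suc m)) * pass_mass d' (Suc m)"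
    unfolding balance by (simp add: distrib_right add.assoc)
  also have "ennreal (real m / real n) + ennreal (1 / real n) = ennreal (real (Suc m) / real n)"
    by (subst ennreal_plus[symmetric]) (auto simp: add_divide_distrib)
  finally show ?case .
qed

lemma stationary: "bind_pmf stat (mq_step n \<sigma>) = stat"
proof (rule pmf_eqI)
  fix d' :: "nat \<Rightarrow> nat"
  have "ennreal (pmf (bind_pmf stat (mq_step n \<sigma>)) d') = (\<integral>\<^sup>+i. end_mass d' i \<partial>\<sigma>)"
    unfolding mq_step_def end_mass_def
    by (simp add: ennreal_pmf_bind nn_integral_pmf_commute[of _ \<sigma>])
  also have "\<dots> = (\<Sum>j = 1..n. ennreal (pmf \<sigma> j) * end_mass d' j)"
    using set_pmf_subset
    by (subst nn_integral_measure_pmf_support[of "{1..n}"]) (auto simp: mult.commute)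
  also have "\<dots> = ennreal (pmf \<sigma> n) * end_mass d' n
      + (\<Sum>j = 1..n - 1. ennreal (pmf \<sigma> j) * end_mass d' j)"
    using n_ge_1 by (cases n) (simp_all add: add.commute)
  also have "\<dots> = ennreal (real (n - 1) / real n) * pmf stat d'
      + (ennreal (pmf \<sigma> n) * end_mass d' n + ennreal (sigma_le (n - 1)) * pass_mass d' (n - 1))"
    using n_ge_1 by (subst flow_telescope) (simp_all add: add_ac)
  also have "\<dots> = ennreal (real (n - 1) / real n + 1 / real n) * pmf stat d'"
    unfolding flow_balance_last by (simp add: distrib_right)
  also have "\<dots> = ennreal (pmf stat d')"
    using n_ge_1 by (simp add: of_nat_diff field_simps)
  finally show "pmf (bind_pmf stat (mq_step n \<sigma>)) d' = pmf stat d'"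
    by simp
qed

end

theorem theorem5:
  fixes n :: nat and \<sigma> :: "nat pmf"
  assumes "set_pmf \<sigma> \<subseteq> {1..n}"
    and "\<forall>i\<in>{1..n-1}. measure_pmf.prob \<sigma> {..i} > real i / real n"
  shows "mq_stationary n \<sigma>
           (Pi_pmf {1..n-1} 0
              (\<lambda>i. geometric_pmf (1 - real i / (real n * measure_pmf.prob \<sigma> {..i}))))"
proof -
  interpret multiqueue n \<sigma>
    using assms by unfold_locales
  have "(\<lambda>i. geometric_pmf (1 - real i / (real n * measure_pmf.prob \<sigma> {..i}))) = marginal"
    by (simp add: fun_eq_iff marginal_def ratio_def sigma_le_def)
  then show ?thesis
    unfolding mq_stationary_def using stationary stat_eq_Pi_pmf by simp
qed

end
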